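(* Let $X$ be a real Banach space which is an $L$-summand in its bidual, and let $Y$ be a (closed linear) subspace of $X$ which is also an $L$-summand in its bidual. Then $(X,Y,\mathcal{F}(X))$ has weak-$\mathscr{F}_{cwmc}$-SACP, where $\mathcal{F}(X)$ is the family of nonempty finite subsets of $X$ and $\mathscr{F}_{cwmc}$ is the class of all convex, weakly strictly monotone, coercive functions $f:[0,\infty)^N\to[0,\infty)$ (for $F\in\mathcal{F}(X)$ with $card(F)=N$).
   Context: A linear projection $P$ on a Banach space $Z$ is an $L$-projection if $\|z\|=\|Pz\|+\|z-Pz\|$ for all $z$; $Z$ is an $L$-summand in its bidual ($L$-embedded) if its canonical image in $Z^{**}$ is the range of an $L$-projection on $Z^{**}$. On $[0,\infty)^N$ with coordinatewise order, $f$ is monotone if $a\le b$ implies $f(a)\le f(b)$; weakly strictly monotone if monotone and $a_i<b_i$ for all $i$ implies $f(a)<f(b)$; coercive if $f(a)\to\infty$ as $\max_i a_i\to\infty$. For $F=\{x_1,\dots,x_N\}$, $r_f(x,F)=f(\|x-x_1\|,\dots,\|x-x_N\|)$, $\mathrm{rad}_Y^f(F)=\inf_{y\in Y}r_f(y,F)$. Weak-$\mathscr{F}$-SACP: for every $F$, every $f\in\mathscr{F}$ and every sequence $(y_n)\subseteq Y$ with $r_f(y_n,F)\to\mathrm{rad}_Y^f(F)$, $(y_n)$ has a weakly convergent subsequence. *)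

theory Defs
  imports "HOL-Analysis.Analysis"
begin

definition canon_bidual :: "'a::banach \<Rightarrow> (('a \<Rightarrow>\<^sub>L real) \<Rightarrow>\<^sub>L real)" where
  "canon_bidual x = Blinfun (\<lambda>\<phi>. blinfun_apply \<phi> x)"

definition L_projection :: "('z::real_normed_vector \<Rightarrow> 'z) \<Rightarrow> bool" where
  "L_projection P \<longleftrightarrow> linear P \<and> (\<forall>z. P (P z) = P z)
      \<and> (\<forall>z. norm z = norm (P z) + norm (z - P z))"

definition L_embedded :: "'a::banach itself \<Rightarrow> bool" where
  "L_embedded _ \<longleftrightarrow>
     (\<exists>P :: (('a \<Rightarrow>\<^sub>L real) \<Rightarrow>\<^sub>L real) \<Rightarrow> (('a \<Rightarrow>\<^sub>L real) \<Rightarrow>\<^sub>L real).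
        L_projection P \<and> range P = range (canon_bidual :: 'a \<Rightarrow> _))"

definition weakly_converges_to :: "(nat \<Rightarrow> 'a::real_normed_vector) \<Rightarrow> 'a \<Rightarrow> bool" where
  "weakly_converges_to u x \<longleftrightarrow> (\<forall>\<phi> :: 'a \<Rightarrow>\<^sub>L real. (\<lambda>n. \<phi> (u n)) \<longlonglongrightarrow> \<phi> x)"

text \<open>The positive cone [0,\<infinity>)^N, realised as functions nat \<Rightarrow> real vanishing from N on.\<close>
definition cone :: "nat \<Rightarrow> (nat \<Rightarrow> real) set" where
  "cone N = {a. (\<forall>i<N. 0 \<le> a i) \<and> (\<forall>i\<ge>N. a i = 0)}"

text \<open>The class F_cwmc of functions f : [0,\<infinity>)^N \<rightarrow> [0,\<infinity>) that are convex,
  weakly strictly monotone and coercive (only values on cone N matter).\<close>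
definition F_cwmc :: "nat \<Rightarrow> ((nat \<Rightarrow> real) \<Rightarrow> real) \<Rightarrow> bool" where
  "F_cwmc N f \<longleftrightarrow>
     (\<forall>a\<in>cone N. 0 \<le> f a)
   \<and> (\<forall>a\<in>cone N. \<forall>b\<in>cone N. \<forall>t::real. 0 \<le> t \<and> t \<le> 1 \<longrightarrow>
          f (\<lambda>i. t * a i + (1 - t) * b i) \<le> t * f a + (1 - t) * f b)
   \<and> (\<forall>a\<in>cone N. \<forall>b\<in>cone N. (\<forall>i<N. a i \<le> b i) \<longrightarrow> f a \<le> f b)
   \<and> (\<forall>a\<in>cone N. \<forall>b\<in>cone N. (\<forall>i<N. a i < b i) \<longrightarrow> f a < f b)
   \<and> (\<forall>M::real. \<exists>R::real. \<forall>a\<in>cone N. (\<exists>i<N. R \<le> a i) \<longrightarrow> M \<le> f a)"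

text \<open>r_f(x,F) for F enumerated by the distinct list xs (N = length xs).\<close>
definition r_f :: "((nat \<Rightarrow> real) \<Rightarrow> real) \<Rightarrow> 'a::real_normed_vector \<Rightarrow> 'a list \<Rightarrow> real" where
  "r_f f x xs = f (\<lambda>i. if i < length xs then norm (x - xs ! i) else 0)"

definition rad_f :: "((nat \<Rightarrow> real) \<Rightarrow> real) \<Rightarrow> 'a::real_normed_vector set \<Rightarrow> 'a list \<Rightarrow> real" where
  "rad_f f Y xs = (INF y\<in>Y. r_f f y xs)"

definition weak_cwmc_SACP :: "'a::real_normed_vector set \<Rightarrow> bool" where
  "weak_cwmc_SACP Y \<longleftrightarrow>
     (\<forall>xs :: 'a list. \<forall>f. \<forall>u :: nat \<Rightarrow> 'a.
        xs \<noteq> [] \<and> distinct xs \<and> F_cwmc (length xs) f \<and> (\<forall>n. u n \<in> Y)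
        \<and> (\<lambda>n. r_f f (u n) xs) \<longlonglongrightarrow> rad_f f Y xs
        \<longrightarrow> (\<exists>s x. strict_mono s \<and> weakly_converges_to (u \<circ> s) x))"

end

(* A minimizing sequence J v_n for r_f(-, F) over Y is bounded because f is coercive. The
   crux is that every weak-star cluster point of (v_n) in the bidual of Y is canonical: since
   X and Y are both L-embedded, the non-canonical part t of a cluster point would add norm t
   to all distances from J v_n to F in the limit, and strict monotonicity of f rules this out
   for a minimizing sequence. A bounded sequence whose subsequences only have canonical
   weak-star cluster points has a weakly convergent subsequence; countably many norming
   functionals and a diagonal argument replace the Eberlein-Smulian theorem. *)

theory Submission
  imports Defs "HOL-Library.Diagonal_Subsequence"
begin

section \<open>Hahn--Banach\<close>

definition dominated_graph :: "real \<Rightarrow> ('a::real_normed_vector \<times> real) set \<Rightarrow> bool" where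
  "dominated_graph C G \<longleftrightarrow>
     (\<forall>x a y b. (x, a) \<in> G \<longrightarrow> (y, b) \<in> G \<longrightarrow> (x + y, a + b) \<in> G)
   \<and> (\<forall>x a c. (x, a) \<in> G \<longrightarrow> (c *\<^sub>R x, c * a) \<in> G)
   \<and> (\<forall>x a. (x, a) \<in> G \<longrightarrow> a \<le> C * norm x)"

lemma dominated_graph_single_valued:
  assumes "dominated_graph C G" "(x, a) \<in> G" "(x, b) \<in> G"
  shows "a = b"
proof -
  have "(x + (-1) *\<^sub>R x, a + (-1) * b) \<in> G" "(x + (-1) *\<^sub>R x, b + (-1) * a) \<in> G"
    using assms unfolding dominated_graph_def by blast+
  hence "a - b \<le> 0" "b - a \<le> 0"
    using assms(1) unfolding dominated_graph_def by force+
  thus ?thesis by simp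
qed

lemma dominated_graph_Union_chain:
  assumes "Ch \<noteq> {}" "\<And>G. G \<in> Ch \<Longrightarrow> dominated_graph C G"
    and "\<And>G H. G \<in> Ch \<Longrightarrow> H \<in> Ch \<Longrightarrow> G \<subseteq> H \<or> H \<subseteq> G"
  shows "dominated_graph C (\<Union>Ch)"
  unfolding dominated_graph_def
proof (intro conjI allI impI)
  fix x a y b assume "(x, a) \<in> \<Union>Ch" "(y, b) \<in> \<Union>Ch"
  then obtain G H where "G \<in> Ch" "H \<in> Ch" "(x, a) \<in> G" "(y, b) \<in> H" by blast
  with assms(3) obtain K where "K \<in> Ch" "(x, a) \<in> K" "(y, b) \<in> K" by blast
  thus "(x + y, a + b) \<in> \<Union>Ch" using assms(2) unfolding dominated_graph_def by blast
next
  fix x a c assume "(x, a) \<in> \<Union>Ch"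
  then obtain G where "G \<in> Ch" "(x, a) \<in> G" by blast
  thus "(c *\<^sub>R x, c * a) \<in> \<Union>Ch" using assms(2) unfolding dominated_graph_def by blast
next
  fix x a assume "(x, a) \<in> \<Union>Ch"
  then obtain G where "G \<in> Ch" "(x, a) \<in> G" by blast
  thus "a \<le> C * norm x" using assms(2) unfolding dominated_graph_def by blast
qed

lemma dominated_graph_zero:
  assumes "dominated_graph C G" "G \<noteq> {}"
  shows "(0, 0) \<in> G"
proof -
  obtain x a where "(x, a) \<in> G" using assms(2) by auto
  hence "(0 *\<^sub>R x, 0 * a) \<in> G" using assms(1) unfolding dominated_graph_def by blast
  thus ?thesis by simp
qed

text \<open>The one-dimensional step of Hahn--Banach: a value at the new direction \<open>x0\<close> is
  squeezed between a supremum and an infimum, which are in the right order because the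
  graph is dominated by \<open>C * norm\<close>.\<close>
lemma dominated_graph_extension_value:
  assumes G: "dominated_graph C G" "G \<noteq> {}" and "0 \<le> C"
  obtains c where "\<And>t a. (t, a) \<in> G \<Longrightarrow> a - C * norm (t - x0) \<le> c"
    and "\<And>s b. (s, b) \<in> G \<Longrightarrow> c \<le> C * norm (s + x0) - b"
proof -
  define L where "L = {a - C * norm (t - x0) | t a. (t, a) \<in> G}"
  have L_le: "l \<le> C * norm (s + x0) - b" if "l \<in> L" and "(s, b) \<in> G" for l s b
  proof -
    obtain t a where ta: "(t, a) \<in> G" "l = a - C * norm (t - x0)" using \<open>l \<in> L\<close> L_def by blast
    have "a + b \<le> C * norm (t + s)"
      using G(1) ta(1) \<open>(s, b) \<in> G\<close> unfolding dominated_graph_def by blast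
    also have "\<dots> \<le> C * (norm (t - x0) + norm (s + x0))"
      using norm_triangle_ineq[of "t - x0" "s + x0"] \<open>0 \<le> C\<close> by (intro mult_left_mono) simp_all
    finally show ?thesis using ta by (simp add: algebra_simps)
  qed
  have zero: "(0, 0) \<in> G" using dominated_graph_zero[OF G] .
  have "bdd_above L" using L_le[OF _ zero] by (intro bdd_aboveI) blast
  have "a - C * norm (t - x0) \<le> Sup L" if "(t, a) \<in> G" for t a
    using that L_def \<open>bdd_above L\<close> by (intro cSup_upper) auto
  moreover have "Sup L \<le> C * norm (s + x0) - b" if "(s, b) \<in> G" for s b
    using L_le[OF _ that] zero L_def by (intro cSup_least) auto
  ultimately show ?thesis by (rule that)
qed

lemma dominated_graph_extension_bound:
  assumes G: "dominated_graph C G" and "(t, a) \<in> G"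
    and lower: "\<And>t a. (t, a) \<in> G \<Longrightarrow> a - C * norm (t - x0) \<le> c"
    and upper: "\<And>s b. (s, b) \<in> G \<Longrightarrow> c \<le> C * norm (s + x0) - b"
  shows "a + r * c \<le> C * norm (t + r *\<^sub>R x0)"
proof -
  have scaled: "(q *\<^sub>R t, q * a) \<in> G" for q
    using G \<open>(t, a) \<in> G\<close> unfolding dominated_graph_def by blast
  show ?thesis
  proof (cases r "0 :: real" rule: linorder_cases)
    case less
    define q where "q = - r"
    have q: "q > 0" using less q_def by simp
    have "q * ((1/q) * a - C * norm ((1/q) *\<^sub>R t - x0)) \<le> q * c"
      using lower[OF scaled[of "1/q"]] q by simp
    moreover have "q * ((1/q) * a - C * norm ((1/q) *\<^sub>R t - x0))
        = a - C * (q * norm ((1/q) *\<^sub>R t - x0))"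
      using q by (simp add: algebra_simps)
    moreover have "q * norm ((1/q) *\<^sub>R t - x0) = norm (q *\<^sub>R ((1/q) *\<^sub>R t - x0))"
      using q by simp
    moreover have "q *\<^sub>R ((1/q) *\<^sub>R t - x0) = t + r *\<^sub>R x0"
      using q q_def by (simp add: algebra_simps)
    ultimately have "a - C * norm (t + r *\<^sub>R x0) \<le> q * c" by metis
    thus ?thesis using q_def by (simp add: algebra_simps)
  next
    case equal thus ?thesis using G \<open>(t, a) \<in> G\<close> unfolding dominated_graph_def by simp
  next
    case greater
    have "r * c \<le> r * (C * norm ((1/r) *\<^sub>R t + x0) - (1/r) * a)"
      using upper[OF scaled[of "1/r"]] greater by simp
    also have "\<dots> = C * (r * norm ((1/r) *\<^sub>R t + x0)) - a"
      using greater by (simp add: algebra_simps)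
    also have "r * norm ((1/r) *\<^sub>R t + x0) = norm (r *\<^sub>R ((1/r) *\<^sub>R t + x0))"
      using greater by simp
    also have "r *\<^sub>R ((1/r) *\<^sub>R t + x0) = t + r *\<^sub>R x0"
      using greater by (simp add: algebra_simps)
    finally show ?thesis by simp
  qed
qed

lemma dominated_graph_extend:
  assumes G: "dominated_graph C G" "G \<noteq> {}" and "0 \<le> C" and x0: "\<forall>a. (x0, a) \<notin> G"
  shows "\<exists>G'. dominated_graph C G' \<and> G \<subset> G'"
proof -
  have add: "\<And>x a y b. (x, a) \<in> G \<Longrightarrow> (y, b) \<in> G \<Longrightarrow> (x + y, a + b) \<in> G"
    and scale: "\<And>x a c. (x, a) \<in> G \<Longrightarrow> (c *\<^sub>R x, c * a) \<in> G"
    using G(1) unfolding dominated_graph_def by blast+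
  obtain c where lower: "\<And>t a. (t, a) \<in> G \<Longrightarrow> a - C * norm (t - x0) \<le> c"
    and upper: "\<And>s b. (s, b) \<in> G \<Longrightarrow> c \<le> C * norm (s + x0) - b"
    using dominated_graph_extension_value[OF G \<open>0 \<le> C\<close>] by blast
  define G' where "G' = {(t + r *\<^sub>R x0, a + r * c) | t a r. (t, a) \<in> G}"
  have "dominated_graph C G'"
    unfolding dominated_graph_def
  proof (intro conjI allI impI)
    fix x a y b assume "(x, a) \<in> G'" "(y, b) \<in> G'"
    then obtain t1 a1 r1 t2 a2 r2 where "(t1, a1) \<in> G" "(t2, a2) \<in> G"
      "x = t1 + r1 *\<^sub>R x0" "a = a1 + r1 * c" "y = t2 + r2 *\<^sub>R x0" "b = a2 + r2 * c"
      unfolding G'_def by blast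
    hence "(x + y, a + b) = ((t1 + t2) + (r1 + r2) *\<^sub>R x0, (a1 + a2) + (r1 + r2) * c)"
      "(t1 + t2, a1 + a2) \<in> G"
      using add by (auto simp: algebra_simps)
    thus "(x + y, a + b) \<in> G'" unfolding G'_def by blast
  next
    fix x a d assume "(x, a) \<in> G'"
    then obtain t a1 r where "(t, a1) \<in> G" "x = t + r *\<^sub>R x0" "a = a1 + r * c"
      unfolding G'_def by blast
    hence "(d *\<^sub>R x, d * a) = (d *\<^sub>R t + (d * r) *\<^sub>R x0, d * a1 + (d * r) * c)"
      "(d *\<^sub>R t, d * a1) \<in> G"
      using scale by (auto simp: algebra_simps)
    thus "(d *\<^sub>R x, d * a) \<in> G'" unfolding G'_def by blast
  next
    fix x a assume "(x, a) \<in> G'"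
    thus "a \<le> C * norm x"
      unfolding G'_def using dominated_graph_extension_bound[OF G(1) _ lower upper] by blast
  qed
  moreover have "G \<subseteq> G'" unfolding G'_def by force
  moreover have "(x0, c) \<in> G' - G" unfolding G'_def using dominated_graph_zero[OF G] x0 by force
  ultimately show ?thesis by blast
qed

lemma dominated_graph_total_extension:
  assumes "dominated_graph C G0" and "G0 \<noteq> {}" and C: "0 \<le> C"
  obtains M where "dominated_graph C M" "G0 \<subseteq> M" "\<And>x. \<exists>a. (x, a) \<in> M"
proof -
  define A where "A = {G. G0 \<subseteq> G \<and> dominated_graph C G}"
  have "\<exists>M\<in>A. \<forall>G\<in>A. M \<subseteq> G \<longrightarrow> G = M"
  proof (rule Zorn_Lemma2, intro ballI)
    fix Ch assume Ch: "Ch \<in> chains A"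
    show "\<exists>U\<in>A. \<forall>G\<in>Ch. G \<subseteq> U"
    proof (cases "Ch = {}")
      case True thus ?thesis using assms(1) A_def by auto
    next
      case False
      have "Ch \<subseteq> A" and "\<And>G H. G \<in> Ch \<Longrightarrow> H \<in> Ch \<Longrightarrow> G \<subseteq> H \<or> H \<subseteq> G"
        using Ch unfolding chains_def chain_subset_def by blast+
      hence "\<Union>Ch \<in> A"
        using False dominated_graph_Union_chain[OF False] unfolding A_def by blast
      thus ?thesis by blast
    qed
  qed
  then obtain M where "M \<in> A" and M_max: "\<And>G. G \<in> A \<Longrightarrow> M \<subseteq> G \<Longrightarrow> G = M" by blast
  hence M: "dominated_graph C M" and "G0 \<subseteq> M" unfolding A_def by auto
  have "\<exists>a. (x, a) \<in> M" for x
  proof (rule ccontr)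
    assume "\<not> ?thesis"
    then obtain G where "dominated_graph C G" "M \<subset> G"
      using dominated_graph_extend[OF M _ C] \<open>G0 \<subseteq> M\<close> assms(2) by blast
    thus False using M_max[of G] \<open>G0 \<subseteq> M\<close> A_def by auto
  qed
  thus ?thesis using that M \<open>G0 \<subseteq> M\<close> by blast
qed

lemma hahn_banach_graph:
  fixes G0 :: "('a::real_normed_vector \<times> real) set"
  assumes "dominated_graph C G0" and "G0 \<noteq> {}" and C: "0 \<le> C"
  obtains \<phi> :: "'a \<Rightarrow>\<^sub>L real" where "norm \<phi> \<le> C" "\<And>x a. (x, a) \<in> G0 \<Longrightarrow> \<phi> x = a"
proof -
  obtain M where M: "dominated_graph C M" and "G0 \<subseteq> M" and total: "\<And>x. \<exists>a. (x, a) \<in> M"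
    using dominated_graph_total_extension[OF assms] by blast
  define g where "g x = (THE a. (x, a) \<in> M)" for x
  have g_eq: "g x = a \<longleftrightarrow> (x, a) \<in> M" for x a
    using total[of x] dominated_graph_single_valued[OF M] unfolding g_def by (metis theI)
  have "(x, g x) \<in> M" for x using g_eq by blast
  hence g_add: "g (x + y) = g x + g y" and g_scale: "g (r *\<^sub>R x) = r * g x"
    and g_bound: "g x \<le> C * norm x" for x y r
    using M g_eq unfolding dominated_graph_def by blast+
  have g_abs: "\<bar>g x\<bar> \<le> C * norm x" for x
    using g_bound[of x] g_bound[of "-x"] g_scale[of "-1" x] by simp
  have "bounded_linear g"
    by (rule bounded_linear_intro[of _ C]) (simp_all add: g_add g_scale g_abs mult.commute)
  hence "blinfun_apply (Blinfun g) = g" by (rule bounded_linear_Blinfun_apply)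
  moreover have "norm (Blinfun g) \<le> C"
    using C g_abs by (intro norm_blinfun_bound) (simp_all add: calculation)
  moreover have "blinfun_apply (Blinfun g) x = a" if "(x, a) \<in> G0" for x a
    using calculation g_eq that \<open>G0 \<subseteq> M\<close> by auto
  ultimately show ?thesis using that by blast
qed

text \<open>Parametrising the domain by \<open>L\<close> avoids having to show that the induced functional
  on \<open>L ` S\<close> is well defined.\<close>
lemma hahn_banach:
  fixes L :: "'c::real_vector \<Rightarrow> 'a::real_normed_vector" and g :: "'c \<Rightarrow> real"
  assumes "subspace S" "linear L" "linear g" "0 \<le> C"
    and "\<And>c. c \<in> S \<Longrightarrow> g c \<le> C * norm (L c)"
  obtains \<phi> :: "'a \<Rightarrow>\<^sub>L real" where "norm \<phi> \<le> C" "\<And>c. c \<in> S \<Longrightarrow> \<phi> (L c) = g c"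
proof -
  define G where "G = (\<lambda>c. (L c, g c)) ` S"
  have "dominated_graph C G"
    unfolding dominated_graph_def
  proof (intro conjI allI impI)
    fix x a y b assume "(x, a) \<in> G" "(y, b) \<in> G"
    then obtain c d where "c \<in> S" "d \<in> S" "(x, a) = (L c, g c)" "(y, b) = (L d, g d)"
      unfolding G_def by blast
    thus "(x + y, a + b) \<in> G" unfolding G_def using assms(1-3)
      by (auto simp: linear_add image_iff intro!: bexI[of _ "c + d"] subspace_add)
  next
    fix x a r assume "(x, a) \<in> G"
    then obtain c where "c \<in> S" "(x, a) = (L c, g c)" unfolding G_def by blast
    thus "(r *\<^sub>R x, r * a) \<in> G" unfolding G_def using assms(1-3)
      by (auto simp: linear_scale image_iff intro!: bexI[of _ "r *\<^sub>R c"] subspace_scale)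
  next
    fix x a assume "(x, a) \<in> G"
    thus "a \<le> C * norm x" using assms(5) unfolding G_def by blast
  qed
  moreover have "G \<noteq> {}" using subspace_0[OF assms(1)] G_def by blast
  ultimately obtain \<phi> :: "'a \<Rightarrow>\<^sub>L real" where "norm \<phi> \<le> C" "\<And>x a. (x, a) \<in> G \<Longrightarrow> \<phi> x = a"
    using hahn_banach_graph assms(4) by blast
  thus ?thesis using that unfolding G_def by blast
qed

lemma exists_norming_functional:
  fixes x :: "'a::real_normed_vector"
  obtains \<phi> :: "'a \<Rightarrow>\<^sub>L real" where "norm \<phi> \<le> 1" "\<phi> x = norm x"
proof -
  have "r * norm x \<le> 1 * norm (r *\<^sub>R x)" for r
    by (simp add: mult_right_mono)
  moreover have "linear (\<lambda>r::real. r *\<^sub>R x)" "linear (\<lambda>r::real. r * norm x)"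
    by (auto intro: linearI simp: algebra_simps)
  ultimately obtain \<phi> :: "'a \<Rightarrow>\<^sub>L real" where "norm \<phi> \<le> 1" "\<And>r::real. \<phi> (r *\<^sub>R x) = r * norm x"
    using hahn_banach[of UNIV "\<lambda>r. r *\<^sub>R x" "\<lambda>r. r * norm x" 1] by auto
  thus ?thesis using that[of \<phi>] by (metis scaleR_one mult_1)
qed

section \<open>Biduals and linear isometries\<close>

lemma canon_bidual_apply [simp]: "blinfun_apply (canon_bidual x) \<phi> = \<phi> x"
  unfolding canon_bidual_def
  by (simp add: bounded_linear_Blinfun_apply blinfun.bounded_linear_left)

lemma canon_bidual_zero [simp]: "canon_bidual 0 = 0"
  by (rule blinfun_eqI) simp

lemma canon_bidual_add: "canon_bidual (x + y) = canon_bidual x + canon_bidual y"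
  by (rule blinfun_eqI) (simp add: blinfun.add_right plus_blinfun.rep_eq)

lemma canon_bidual_diff: "canon_bidual (x - y) = canon_bidual x - canon_bidual y"
  by (rule blinfun_eqI) (simp add: blinfun.diff_right minus_blinfun.rep_eq)

lemma norm_canon_bidual [simp]: "norm (canon_bidual x) = norm x"
proof (rule antisym)
  show "norm (canon_bidual x) \<le> norm x"
  proof (rule norm_blinfun_bound)
    fix \<phi> :: "'a \<Rightarrow>\<^sub>L real"
    show "norm (canon_bidual x \<phi>) \<le> norm x * norm \<phi>"
      using norm_blinfun[of \<phi> x] by (simp add: mult.commute)
  qed simp
  obtain \<phi> :: "'a \<Rightarrow>\<^sub>L real" where \<phi>: "norm \<phi> \<le> 1" "\<phi> x = norm x"
    by (rule exists_norming_functional)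
  have "norm x = norm (canon_bidual x \<phi>)" using \<phi> by simp
  also have "\<dots> \<le> norm (canon_bidual x) * norm \<phi>" by (rule norm_blinfun)
  also have "\<dots> \<le> norm (canon_bidual x)" using \<phi> by (simp add: mult_left_le)
  finally show "norm x \<le> norm (canon_bidual x)" .
qed

lemma blinfun_nearly_attains_norm:
  fixes f :: "'c::real_normed_vector \<Rightarrow>\<^sub>L real"
  assumes "e > 0"
  obtains \<theta> where "norm \<theta> \<le> 1" "f \<theta> > norm f - e"
proof -
  have "\<exists>\<theta>. norm \<theta> \<le> 1 \<and> f \<theta> > norm f - e"
  proof (rule ccontr)
    assume "\<not> ?thesis"
    hence le: "f \<theta> \<le> norm f - e" if "norm \<theta> \<le> 1" for \<theta> using that by force
    have "norm (f \<theta>) \<le> (norm f - e) * norm \<theta>" for \<theta>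
    proof (cases "\<theta> = 0")
      case False
      let ?u = "(1 / norm \<theta>) *\<^sub>R \<theta>"
      have "f ?u \<le> norm f - e" "f (- ?u) \<le> norm f - e" using False by (simp_all add: le)
      hence "\<bar>f \<theta>\<bar> / norm \<theta> \<le> norm f - e"
        by (simp add: blinfun.scaleR_right blinfun.minus_right abs_le_iff)
      thus ?thesis using False by (simp add: field_simps)
    qed simp
    moreover have "0 \<le> norm f - e" using le[of 0] by simp
    ultimately have "norm f \<le> norm f - e" by (intro norm_blinfun_bound)
    thus False using assms by simp
  qed
  thus ?thesis using that by blast
qed

lemma L_projection_fixes_range:
  assumes "L_projection P" "z \<in> range P"
  shows "P z = z"
  using assms unfolding L_projection_def by auto

definition bidual_map ::
    "('b::real_normed_vector \<Rightarrow> 'a::real_normed_vector)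
      \<Rightarrow> ('b \<Rightarrow>\<^sub>L real) \<Rightarrow>\<^sub>L real \<Rightarrow> ('a \<Rightarrow>\<^sub>L real) \<Rightarrow>\<^sub>L real" where
  "bidual_map J \<eta> = \<eta> o\<^sub>L Blinfun (\<lambda>\<phi>. \<phi> o\<^sub>L Blinfun J)"

lemma bidual_map_apply: "blinfun_apply (bidual_map J \<eta>) \<phi> = \<eta> (\<phi> o\<^sub>L Blinfun J)"
  unfolding bidual_map_def
  by (simp add: bounded_linear_Blinfun_apply
      bounded_bilinear.bounded_linear_left[OF bounded_bilinear_blinfun_compose])

lemma bidual_map_add: "bidual_map J (\<eta> + \<zeta>) = bidual_map J \<eta> + bidual_map J \<zeta>"
  by (rule blinfun_eqI) (simp add: bidual_map_apply plus_blinfun.rep_eq)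

locale linear_isometry =
  fixes J :: "'b::banach \<Rightarrow> 'a::banach"
  assumes linear: "linear J" and norm_J: "\<And>y. norm (J y) = norm y"
begin

lemma Blinfun_J_apply [simp]: "blinfun_apply (Blinfun J) = J"
proof -
  have "bounded_linear J"
    by (rule bounded_linear_intro[of _ 1]) (simp_all add: linear_add linear_scale linear norm_J)
  thus ?thesis by (rule bounded_linear_Blinfun_apply)
qed

lemma extend_functional:
  fixes \<theta> :: "'b \<Rightarrow>\<^sub>L real"
  obtains \<phi> :: "'a \<Rightarrow>\<^sub>L real" where "norm \<phi> \<le> norm \<theta>" "\<phi> o\<^sub>L Blinfun J = \<theta>"
proof -
  have "\<theta> b \<le> norm \<theta> * norm (J b)" for b
    using norm_blinfun[of \<theta> b] by (simp add: norm_J)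
  then obtain \<phi> :: "'a \<Rightarrow>\<^sub>L real" where "norm \<phi> \<le> norm \<theta>" "\<And>b. \<phi> (J b) = \<theta> b"
    using hahn_banach[of UNIV J "blinfun_apply \<theta>" "norm \<theta>"] linear
    by (auto simp: bounded_linear.linear[OF blinfun.bounded_linear_right])
  moreover from this(2) have "\<phi> o\<^sub>L Blinfun J = \<theta>" by (intro blinfun_eqI) simp
  ultimately show ?thesis using that by blast
qed

lemma bidual_map_canon: "bidual_map J (canon_bidual b) = canon_bidual (J b)"
  by (rule blinfun_eqI) (simp add: bidual_map_apply)

lemma norm_bidual_map [simp]: "norm (bidual_map J \<eta>) = norm \<eta>"
proof (rule antisym)
  have "norm (\<phi> o\<^sub>L Blinfun J) \<le> norm \<phi>" for \<phi> :: "'a \<Rightarrow>\<^sub>L real"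
  proof (rule norm_blinfun_bound)
    fix b show "norm ((\<phi> o\<^sub>L Blinfun J) b) \<le> norm \<phi> * norm b"
      using norm_blinfun[of \<phi> "J b"] by (simp add: norm_J)
  qed simp
  hence "norm (\<eta> (\<phi> o\<^sub>L Blinfun J)) \<le> norm \<eta> * norm \<phi>" for \<phi>
    by (meson norm_blinfun norm_ge_zero mult_left_mono order_trans)
  thus "norm (bidual_map J \<eta>) \<le> norm \<eta>"
    by (intro norm_blinfun_bound) (simp_all add: bidual_map_apply)
next
  show "norm \<eta> \<le> norm (bidual_map J \<eta>)"
  proof (rule norm_blinfun_bound)
    fix \<theta> :: "'b \<Rightarrow>\<^sub>L real"
    obtain \<phi> where \<phi>: "norm \<phi> \<le> norm \<theta>" "\<phi> o\<^sub>L Blinfun J = \<theta>" by (rule extend_functional)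
    have "norm (\<eta> \<theta>) = norm (bidual_map J \<eta> \<phi>)" using \<phi>(2) by (simp add: bidual_map_apply)
    also have "\<dots> \<le> norm (bidual_map J \<eta>) * norm \<phi>" by (rule norm_blinfun)
    also have "\<dots> \<le> norm (bidual_map J \<eta>) * norm \<theta>" using \<phi>(1) by (simp add: mult_left_mono)
    finally show "norm (\<eta> \<theta>) \<le> norm (bidual_map J \<eta>) * norm \<theta>" .
  qed simp
qed

lemma extend_functional_L_orthogonal:
  fixes \<theta> :: "'b \<Rightarrow>\<^sub>L real"
  assumes orth: "\<And>b. norm (J b + x0) = norm b + norm x0" and "norm \<theta> \<le> 1"
  obtains \<phi> :: "'a \<Rightarrow>\<^sub>L real" where "norm \<phi> \<le> 1" "\<phi> o\<^sub>L Blinfun J = \<theta>" "\<phi> x0 = norm x0"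
proof -
  have orth_scaled: "norm (J b + r *\<^sub>R x0) = norm b + \<bar>r\<bar> * norm x0" for b r
  proof (cases "r = 0")
    case False
    have "J b + r *\<^sub>R x0 = r *\<^sub>R (J ((1/r) *\<^sub>R b) + x0)"
      using False by (simp add: linear_scale[OF linear] algebra_simps)
    hence "norm (J b + r *\<^sub>R x0) = \<bar>r\<bar> * (norm ((1/r) *\<^sub>R b) + norm x0)"
      by (simp only: norm_scaleR orth)
    thus ?thesis using False by (simp add: algebra_simps)
  qed (simp add: norm_J)
  define L where "L = (\<lambda>(b, r). J b + r *\<^sub>R x0)"
  define g where "g = (\<lambda>(b, r). \<theta> b + r * norm x0)"
  have "linear L" "linear g"
    unfolding L_def g_def
    by (auto intro!: linearI simp: linear_add[OF linear] linear_scale[OF linear]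
        blinfun.add_right blinfun.scaleR_right algebra_simps)
  moreover have "g c \<le> 1 * norm (L c)" for c
  proof -
    obtain b r where c: "c = (b, r)" by fastforce
    have "\<theta> b \<le> norm b"
      using norm_blinfun[of \<theta> b] assms(2) mult_right_mono[of "norm \<theta>" 1 "norm b"] by simp
    moreover have "r * norm x0 \<le> \<bar>r\<bar> * norm x0" by (simp add: mult_right_mono)
    ultimately show ?thesis unfolding c L_def g_def by (simp add: orth_scaled)
  qed
  ultimately obtain \<phi> :: "'a \<Rightarrow>\<^sub>L real" where \<phi>: "norm \<phi> \<le> 1" "\<And>c. \<phi> (L c) = g c"
    using hahn_banach[of UNIV L g 1] by auto
  have "\<phi> (J b) = \<theta> b" for b using \<phi>(2)[of "(b, 0)"] by (simp add: L_def g_def)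
  hence "\<phi> o\<^sub>L Blinfun J = \<theta>" by (intro blinfun_eqI) simp
  moreover have "\<phi> x0 = norm x0"
    using \<phi>(2)[of "(0, 1)"] by (simp add: L_def g_def linear_0[OF linear])
  ultimately show ?thesis using that \<phi>(1) by blast
qed

end

section \<open>L-embedded spaces\<close>

locale L_embedded_pair = linear_isometry J for J :: "'b::banach \<Rightarrow> 'a::banach" +
  fixes P :: "('a \<Rightarrow>\<^sub>L real) \<Rightarrow>\<^sub>L real \<Rightarrow> ('a \<Rightarrow>\<^sub>L real) \<Rightarrow>\<^sub>L real"
    and Q :: "('b \<Rightarrow>\<^sub>L real) \<Rightarrow>\<^sub>L real \<Rightarrow> ('b \<Rightarrow>\<^sub>L real) \<Rightarrow>\<^sub>L real"
  assumes P: "L_projection P" and range_P: "range P = range canon_bidual"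
    and Q: "L_projection Q" and range_Q: "range Q = range canon_bidual"
begin

lemma linear_P: "linear P" and norm_P: "norm z = norm (P z) + norm (z - P z)"
  using P unfolding L_projection_def by blast+

lemma linear_Q: "linear Q" and norm_Q: "norm \<zeta> = norm (Q \<zeta>) + norm (\<zeta> - Q \<zeta>)"
  using Q unfolding L_projection_def by blast+

lemma P_canon [simp]: "P (canon_bidual x) = canon_bidual x"
  using L_projection_fixes_range[OF P] range_P by simp

lemma Q_canon [simp]: "Q (canon_bidual y) = canon_bidual y"
  using L_projection_fixes_range[OF Q] range_Q by simp

lemma Q_decompose:
  obtains y t where "\<eta> = canon_bidual y + t" "Q t = 0" "\<eta> \<notin> range canon_bidual \<Longrightarrow> t \<noteq> 0"
proof -
  obtain y where y: "Q \<eta> = canon_bidual y" using range_Q by (metis rangeE rangeI)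
  have "Q (\<eta> - Q \<eta>) = 0"
    using Q unfolding L_projection_def by (simp add: linear_diff)
  thus ?thesis using that[of y "\<eta> - Q \<eta>"] y by auto
qed

text \<open>The L-decompositions of \<open>canon_bidual b + t\<close> in both biduals, compared through the
  isometry \<open>bidual_map J\<close>, make the \<open>X\<close>-part of \<open>bidual_map J t\<close> L-orthogonal to \<open>range J\<close>.\<close>
lemma L_orthogonal_part:
  assumes t: "Q t = 0" and x0: "P (bidual_map J t) = canon_bidual x0"
  shows "norm (J b + x0) = norm b + norm x0"
proof -
  define w where "w = bidual_map J t"
  define z where "z = canon_bidual b + t"
  have "Q z = canon_bidual b" using linear_Q t unfolding z_def by (simp add: linear_add)
  hence norm_z: "norm z = norm b + norm t" using norm_Q[of z] unfolding z_def by simp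
  have Jz: "bidual_map J z = canon_bidual (J b) + w"
    unfolding z_def w_def by (simp add: bidual_map_add bidual_map_canon)
  hence PJz: "P (bidual_map J z) = canon_bidual (J b + x0)"
    using linear_P x0 unfolding w_def by (simp add: linear_add canon_bidual_add)
  have "bidual_map J z - P (bidual_map J z) = w - P w"
    using Jz PJz x0 unfolding w_def by (simp add: canon_bidual_add)
  hence "norm z = norm (J b + x0) + norm (w - P w)"
    using norm_P[of "bidual_map J z"] PJz by simp
  moreover have "norm t = norm x0 + norm (w - P w)"
    using norm_P[of w] x0 unfolding w_def by simp
  ultimately show ?thesis using norm_z by simp
qed

text \<open>Were the \<open>X\<close>-part \<open>x0\<close> of \<open>bidual_map J t\<close> nonzero, a functional norming \<open>x0\<close> and
  extending a near-minimizer of \<open>t\<close> would take a value on \<open>bidual_map J t\<close> both below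
  \<open>norm x0 - norm t\<close> and at least \<open>2 * norm x0 - norm t\<close>.\<close>
lemma P_bidual_map_kernel:
  assumes t: "Q t = 0"
  shows "P (bidual_map J t) = 0"
proof -
  define w where "w = bidual_map J t"
  obtain x0 where x0: "P w = canon_bidual x0" using range_P by (metis rangeE rangeI)
  have norm_t: "norm t = norm x0 + norm (w - P w)"
    using norm_P[of w] x0 unfolding w_def by simp
  have "norm x0 \<le> 0"
  proof (rule ccontr)
    assume "\<not> norm x0 \<le> 0"
    then obtain \<theta> where \<theta>: "norm \<theta> \<le> 1" "t \<theta> > norm t - norm x0"
      using blinfun_nearly_attains_norm[of "norm x0" t] by auto
    have "norm (- \<theta>) \<le> 1" using \<theta>(1) by simp
    then obtain \<phi> where \<phi>: "norm \<phi> \<le> 1" "\<phi> o\<^sub>L Blinfun J = - \<theta>" "\<phi> x0 = norm x0"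
      using extend_functional_L_orthogonal L_orthogonal_part[OF t x0[unfolded w_def]] by blast
    have "w \<phi> = - t \<theta>" using \<phi>(2) unfolding w_def by (simp add: bidual_map_apply blinfun.minus_right)
    moreover have "w \<phi> = norm x0 + (w - P w) \<phi>" using x0 \<phi>(3) by (simp add: minus_blinfun.rep_eq)
    moreover have "\<bar>(w - P w) \<phi>\<bar> \<le> norm (w - P w)"
      using norm_blinfun[of "w - P w" \<phi>] \<phi>(1) by (smt (verit) mult_left_le norm_ge_zero real_norm_def)
    ultimately show False using \<theta>(2) norm_t \<open>\<not> norm x0 \<le> 0\<close> by linarith
  qed
  thus ?thesis using x0 unfolding w_def by simp
qed

lemma norm_bidual_map_minus_canon:
  assumes "Q t = 0"
  shows "norm (bidual_map J (canon_bidual y + t) - canon_bidual x) = norm (J y - x) + norm t"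
proof -
  define z where "z = bidual_map J (canon_bidual y + t) - canon_bidual x"
  have z: "z = canon_bidual (J y - x) + bidual_map J t"
    unfolding z_def by (simp add: bidual_map_add bidual_map_canon canon_bidual_diff)
  hence "P z = canon_bidual (J y - x)"
    using linear_P P_bidual_map_kernel[OF assms] by (simp add: linear_add)
  thus ?thesis using norm_P[of z] z unfolding z_def by simp
qed

end

section \<open>Weak-star cluster points\<close>

definition weak_star_cluster ::
    "(nat \<Rightarrow> ('c::real_normed_vector \<Rightarrow>\<^sub>L real) \<Rightarrow>\<^sub>L real) \<Rightarrow> ('c \<Rightarrow>\<^sub>L real) \<Rightarrow>\<^sub>L real \<Rightarrow> bool" where
  "weak_star_cluster g \<eta> \<longleftrightarrow>
     (\<forall>\<Phi> e m. finite \<Phi> \<longrightarrow> e > 0 \<longrightarrow> (\<exists>n\<ge>m. \<forall>\<theta>\<in>\<Phi>. \<bar>g n \<theta> - \<eta> \<theta>\<bar> < e))"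

lemma weak_star_clusterD:
  assumes "weak_star_cluster g \<eta>" "finite \<Phi>" "e > 0"
  obtains n where "n \<ge> m" "\<And>\<theta>. \<theta> \<in> \<Phi> \<Longrightarrow> \<bar>g n \<theta> - \<eta> \<theta>\<bar> < e"
proof -
  have "\<exists>n\<ge>m. \<forall>\<theta>\<in>\<Phi>. \<bar>g n \<theta> - \<eta> \<theta>\<bar> < e"
    using assms unfolding weak_star_cluster_def by simp
  thus ?thesis using that by blast
qed

lemma compact_sequence_cluster_point:
  fixes h :: "nat \<Rightarrow> 'a::topological_space"
  assumes "compact K" "\<And>n. h n \<in> K"
  obtains p where "p \<in> K" "\<And>m. p \<in> closure (h ` {m..})"
proof -
  have "K \<inter> \<Inter>(range (\<lambda>m. closure (h ` {m..}))) \<noteq> {}"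
  proof (rule compact_imp_fip[OF assms(1)])
    fix F assume "finite F" "F \<subseteq> range (\<lambda>m. closure (h ` {m..}))"
    then obtain I where "finite I" "F = (\<lambda>m. closure (h ` {m..})) ` I"
      by (meson finite_subset_image)
    hence "h (Max (insert 0 I)) \<in> K \<inter> \<Inter>F"
      using assms(2) by (auto intro!: closure_subset[THEN subsetD])
    thus "K \<inter> \<Inter>F \<noteq> {}" by blast
  qed auto
  thus ?thesis using that by blast
qed

text \<open>Banach--Alaoglu. The weak-star topology is not metrizable, so one only gets a cluster
  point, not a convergent subsequence.\<close>
lemma bounded_weak_star_cluster:
  fixes g :: "nat \<Rightarrow> ('c::real_normed_vector \<Rightarrow>\<^sub>L real) \<Rightarrow>\<^sub>L real"
  assumes bound: "\<And>n. norm (g n) \<le> R"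
  obtains \<eta> where "weak_star_cluster g \<eta>"
proof -
  define K where "K = PiE UNIV (\<lambda>\<theta>::'c \<Rightarrow>\<^sub>L real. cball (0::real) (R * norm \<theta>))"
  have "compact K"
    using compactin_PiE[of "\<lambda>_. euclidean" UNIV "\<lambda>\<theta>::'c \<Rightarrow>\<^sub>L real. cball (0::real) (R * norm \<theta>)"]
    unfolding K_def by (simp add: euclidean_product_topology)
  moreover have "blinfun_apply (g n) \<in> K" for n
  proof -
    have "norm (g n \<theta>) \<le> R * norm \<theta>" for \<theta>
      using norm_blinfun[of "g n" \<theta>] mult_right_mono[OF bound[of n] norm_ge_zero[of \<theta>]]
      by (rule order_trans)
    thus ?thesis unfolding K_def by (simp add: PiE_iff)
  qed
  ultimately obtain p where "p \<in> K" and p: "\<And>m. p \<in> closure ((\<lambda>n. blinfun_apply (g n)) ` {m..})"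
    using compact_sequence_cluster_point[of K "\<lambda>n. blinfun_apply (g n)"] by blast
  have cont: "continuous_on UNIV (\<lambda>q::('c \<Rightarrow>\<^sub>L real) \<Rightarrow> real. q \<theta>)" for \<theta> by simp
  have closed_identity: "a p = b p"
    if "continuous_on UNIV a" "continuous_on UNIV b"
      "\<And>n. a (blinfun_apply (g n)) = b (blinfun_apply (g n))"
    for a b :: "(('c \<Rightarrow>\<^sub>L real) \<Rightarrow> real) \<Rightarrow> real"
  proof -
    have "(\<lambda>n. blinfun_apply (g n)) ` {0..} \<subseteq> {q. a q = b q}" using that(3) by auto
    hence "closure ((\<lambda>n. blinfun_apply (g n)) ` {0..}) \<subseteq> {q. a q = b q}"
      using closed_Collect_eq[OF that(1,2)] by (rule closure_minimal)
    thus ?thesis using p[of 0] by blast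
  qed
  have "bounded_linear p"
  proof (rule bounded_linear_intro)
    show "p (x + y) = p x + p y" for x y
      by (rule closed_identity) (simp_all add: cont continuous_on_add blinfun.add_right)
    show "p (c *\<^sub>R x) = c *\<^sub>R p x" for c x
      by (rule closed_identity) (simp_all add: cont continuous_on_mult_left blinfun.scaleR_right)
    show "norm (p x) \<le> norm x * R" for x
      using \<open>p \<in> K\<close> unfolding K_def by (auto simp: PiE_iff dist_real_def mult.commute)
  qed
  hence p_eq: "blinfun_apply (Blinfun p) = p" by (rule bounded_linear_Blinfun_apply)
  have "weak_star_cluster g (Blinfun p)"
    unfolding weak_star_cluster_def
  proof (intro allI impI)
    fix \<Phi> :: "('c \<Rightarrow>\<^sub>L real) set" and e :: real and m :: nat
    assume "finite \<Phi>" "e > 0"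
    define U where "U = {q. \<forall>\<theta>\<in>\<Phi>. q (id \<theta>) \<in> ball (p \<theta>) e}"
    have "open U" unfolding U_def by (rule product_topology_basis'[OF \<open>finite \<Phi>\<close>]) simp
    moreover have "p \<in> U" unfolding U_def using \<open>e > 0\<close> by simp
    ultimately obtain n where "n \<ge> m" "blinfun_apply (g n) \<in> U"
      using p[of m] open_Int_closure_eq_empty[of U] by blast
    thus "\<exists>n\<ge>m. \<forall>\<theta>\<in>\<Phi>. \<bar>g n \<theta> - Blinfun p \<theta>\<bar> < e"
      unfolding U_def p_eq by (auto simp: dist_real_def abs_minus_commute)
  qed
  thus ?thesis using that by blast
qed

lemma weak_star_cluster_limit:
  assumes "weak_star_cluster g \<eta>" "(\<lambda>n. g n \<theta>) \<longlonglongrightarrow> L"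
  shows "\<eta> \<theta> = L"
proof (rule ccontr)
  assume "\<eta> \<theta> \<noteq> L"
  hence e: "\<bar>\<eta> \<theta> - L\<bar> / 2 > 0" by simp
  then obtain m where m: "\<And>n. n \<ge> m \<Longrightarrow> \<bar>g n \<theta> - L\<bar> < \<bar>\<eta> \<theta> - L\<bar> / 2"
    using assms(2) unfolding LIMSEQ_def dist_real_def by blast
  obtain n where "n \<ge> m" "\<bar>g n \<theta> - \<eta> \<theta>\<bar> < \<bar>\<eta> \<theta> - L\<bar> / 2"
    using weak_star_clusterD[OF assms(1) _ e, of "{\<theta>}" m] by auto
  thus False using m[of n] by (auto simp: abs_less_iff abs_if split: if_splits)
qed

lemma separating_functional:
  fixes x :: "'a::real_normed_vector"
  assumes V: "subspace V" and "x \<notin> closure V"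
  obtains \<phi> :: "'a \<Rightarrow>\<^sub>L real" where "\<And>z. z \<in> V \<Longrightarrow> \<phi> z = 0" "\<phi> x \<noteq> 0"
proof -
  obtain e where e: "e > 0" "ball x e \<inter> V = {}"
    using assms(2) open_contains_ball[of "- closure V"] closure_subset by blast
  define L where "L = (\<lambda>(z, r). z + r *\<^sub>R x)"
  define g where "g = (\<lambda>(z::'a, r). r * e)"
  have S: "subspace (V \<times> (UNIV :: real set))"
    using V unfolding subspace_def by (auto simp: zero_prod_def)
  have linear: "linear L" "linear g"
    unfolding L_def g_def by (auto intro!: linearI simp: algebra_simps)
  have bound: "g c \<le> 1 * norm (L c)" if c_in: "c \<in> V \<times> UNIV" for c
  proof -
    obtain z r where c: "c = (z, r)" "z \<in> V" using c_in by (cases c) auto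
    show ?thesis
    proof (cases "r > 0")
      case True
      have "- ((1/r) *\<^sub>R z) \<in> V" using V c by (simp add: subspace_neg subspace_scale)
      hence "e \<le> norm (x + (1/r) *\<^sub>R z)" using e(2) by (force simp: dist_norm)
      hence "r * e \<le> norm (r *\<^sub>R (x + (1/r) *\<^sub>R z))" using True by simp
      thus ?thesis using True unfolding c L_def g_def by (simp add: algebra_simps)
    next
      case False
      hence "r * e \<le> 0" using e(1) by (simp add: mult_nonpos_nonneg)
      also have "0 \<le> norm (z + r *\<^sub>R x)" by simp
      finally show ?thesis unfolding c L_def g_def by simp
    qed
  qed
  obtain \<phi> :: "'a \<Rightarrow>\<^sub>L real" where \<phi>: "\<And>c. c \<in> V \<times> UNIV \<Longrightarrow> \<phi> (L c) = g c"
    using hahn_banach[OF S linear zero_le_one bound] by blast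
  have "\<phi> z = 0" if "z \<in> V" for z using \<phi>[of "(z, 0)"] that by (simp add: L_def g_def)
  moreover have "\<phi> x \<noteq> 0" using \<phi>[of "(0, 1)"] subspace_0[OF V] e(1) by (simp add: L_def g_def)
  ultimately show ?thesis using that by blast
qed

lemma weak_star_cluster_in_closure:
  fixes w :: "nat \<Rightarrow> 'a::banach"
  assumes "subspace V" "\<And>n. w n \<in> V" "weak_star_cluster (\<lambda>n. canon_bidual (w n)) (canon_bidual x)"
  shows "x \<in> closure V"
proof (rule ccontr)
  assume "x \<notin> closure V"
  then obtain \<phi> :: "'a \<Rightarrow>\<^sub>L real" where \<phi>: "\<And>z. z \<in> V \<Longrightarrow> \<phi> z = 0" "\<phi> x \<noteq> 0"
    using separating_functional[OF assms(1)] by blast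
  hence "\<bar>\<phi> x\<bar> > 0" by simp
  then obtain n where "\<bar>canon_bidual (w n) \<phi> - canon_bidual x \<phi>\<bar> < \<bar>\<phi> x\<bar>"
    using weak_star_clusterD[OF assms(3), of "{\<phi>}" "\<bar>\<phi> x\<bar>" 0] by blast
  thus False using \<phi>(1) assms(2) by simp
qed

lemma weak_star_cluster_norm_lower:
  fixes u :: "nat \<Rightarrow> 'a::banach"
  assumes "weak_star_cluster (\<lambda>n. canon_bidual (u n)) \<zeta>" "finite I" "e > 0"
  obtains n where "n \<ge> m" "\<And>i. i \<in> I \<Longrightarrow> norm (\<zeta> - canon_bidual (z i)) - e < norm (u n - z i)"
proof -
  have "\<forall>i. \<exists>\<phi>. norm \<phi> \<le> 1 \<and> (\<zeta> - canon_bidual (z i)) \<phi> > norm (\<zeta> - canon_bidual (z i)) - e/2"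
    using blinfun_nearly_attains_norm \<open>e > 0\<close> by (metis half_gt_zero)
  then obtain \<phi> where \<phi>: "\<And>i. norm (\<phi> i) \<le> 1"
    "\<And>i. (\<zeta> - canon_bidual (z i)) (\<phi> i) > norm (\<zeta> - canon_bidual (z i)) - e/2"
    by metis
  obtain n where n: "n \<ge> m" "\<And>\<theta>. \<theta> \<in> \<phi> ` I \<Longrightarrow> \<bar>canon_bidual (u n) \<theta> - \<zeta> \<theta>\<bar> < e/2"
    using weak_star_clusterD[OF assms(1), of "\<phi> ` I" "e/2" m] assms(2,3) by auto
  have "norm (\<zeta> - canon_bidual (z i)) - e < norm (u n - z i)" if "i \<in> I" for i
  proof -
    have "\<phi> i (u n - z i) \<le> norm (u n - z i)"
      using norm_blinfun[of "\<phi> i" "u n - z i"] mult_right_mono[OF \<phi>(1)[of i], of "norm (u n - z i)"]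
      by simp
    moreover have "\<zeta> (\<phi> i) - e/2 < \<phi> i (u n)"
      using n(2)[of "\<phi> i"] that unfolding abs_diff_less_iff by simp
    ultimately show ?thesis
      using \<phi>(2)[of i] by (simp add: blinfun.diff_right minus_blinfun.rep_eq)
  qed
  thus ?thesis using that n(1) by blast
qed

lemma weakly_converges_if_subsequences_cluster:
  fixes w :: "nat \<Rightarrow> 'a::banach"
  assumes "\<And>s. strict_mono s \<Longrightarrow> weak_star_cluster (\<lambda>n. canon_bidual (w (s n))) (canon_bidual x)"
  shows "weakly_converges_to w x"
  unfolding weakly_converges_to_def
proof (rule allI, rule ccontr)
  fix \<phi> :: "'a \<Rightarrow>\<^sub>L real"
  assume "\<not> (\<lambda>n. \<phi> (w n)) \<longlonglongrightarrow> \<phi> x"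
  then obtain e where "e > 0" and far: "\<And>m. \<exists>n\<ge>m. e \<le> \<bar>\<phi> (w n) - \<phi> x\<bar>"
    unfolding LIMSEQ_def dist_real_def by (meson not_less)
  define S where "S = {n. e \<le> \<bar>\<phi> (w n) - \<phi> x\<bar>}"
  have "infinite S" unfolding S_def infinite_nat_iff_unbounded_le using far by blast
  hence "strict_mono (enumerate S)" "\<And>n. enumerate S n \<in> S"
    by (simp_all add: strict_mono_enumerate enumerate_in_set)
  moreover obtain n where "\<bar>\<phi> (w (enumerate S n)) - \<phi> x\<bar> < e"
    using weak_star_clusterD[OF assms[OF calculation(1)], of "{\<phi>}" e 0] \<open>e > 0\<close> by auto
  ultimately show False unfolding S_def using not_less by blast
qed

context linear_isometry
begin

lemma weak_star_cluster_bidual_map: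
  assumes "weak_star_cluster (\<lambda>n. canon_bidual (v n)) \<eta>"
  shows "weak_star_cluster (\<lambda>n. canon_bidual (J (v n))) (bidual_map J \<eta>)"
  unfolding weak_star_cluster_def
proof (intro allI impI)
  fix \<Phi> :: "('a \<Rightarrow>\<^sub>L real) set" and e :: real and m :: nat
  assume "finite \<Phi>" "e > 0"
  then obtain n where "n \<ge> m"
    "\<And>\<theta>. \<theta> \<in> (\<lambda>\<phi>. \<phi> o\<^sub>L Blinfun J) ` \<Phi> \<Longrightarrow> \<bar>canon_bidual (v n) \<theta> - \<eta> \<theta>\<bar> < e"
    using weak_star_clusterD[OF assms, of "(\<lambda>\<phi>. \<phi> o\<^sub>L Blinfun J) ` \<Phi>" e m] by auto
  moreover have "\<bar>canon_bidual (J (v n)) \<phi> - bidual_map J \<eta> \<phi>\<bar> < e" if "\<phi> \<in> \<Phi>" for \<phi>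
    using calculation(2)[of "\<phi> o\<^sub>L Blinfun J"] that by (simp add: bidual_map_apply)
  ultimately show "\<exists>n\<ge>m. \<forall>\<phi>\<in>\<Phi>. \<bar>canon_bidual (J (v n)) \<phi> - bidual_map J \<eta> \<phi>\<bar> < e"
    by blast
qed

end

section \<open>Weakly convergent subsequences\<close>

lemma subspace_closure:
  fixes V :: "'a::real_normed_vector set"
  assumes "subspace V"
  shows "subspace (closure V)"
  unfolding subspace_def
proof (intro conjI ballI allI)
  show "0 \<in> closure V" using assms closure_subset subspace_0 by blast
next
  fix x y assume "x \<in> closure V" "y \<in> closure V"
  hence "x + y \<in> closure (V + V)" using closure_sum by (blast intro: set_plus_intro)
  moreover have "V + V \<subseteq> V" using assms by (auto simp: set_plus_def subspace_add)
  ultimately show "x + y \<in> closure V" using closure_mono by blast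
next
  fix c x assume "x \<in> closure V"
  hence "c *\<^sub>R x \<in> closure ((*\<^sub>R) c ` V)" using closure_scaleR by blast
  moreover have "(*\<^sub>R) c ` V \<subseteq> V" using assms by (auto simp: subspace_scale)
  ultimately show "c *\<^sub>R x \<in> closure V" using closure_mono by blast
qed

definition rat_combinations :: "(nat \<Rightarrow> 'a::real_vector) \<Rightarrow> 'a set" where
  "rat_combinations v = range (\<lambda>l. sum_list (map (\<lambda>(q :: rat, j). of_rat q *\<^sub>R v j) l))"

lemma countable_rat_combinations: "countable (rat_combinations v)"
  unfolding rat_combinations_def by simp

lemma rat_combinations_dense:
  fixes v :: "nat \<Rightarrow> 'a::real_normed_vector"
  assumes "y \<in> span (range v)" "\<epsilon> > 0"
  shows "\<exists>d\<in>rat_combinations v. norm (y - d) < \<epsilon>"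
  using assms
proof (induction arbitrary: \<epsilon> rule: span_induct_alt)
  case base
  have "0 \<in> rat_combinations v" unfolding rat_combinations_def by (auto intro: range_eqI[of _ _ "[]"])
  thus ?case using base by force
next
  case (step c x y)
  obtain j where x: "x = v j" using step.hyps by blast
  obtain d where d: "d \<in> rat_combinations v" "norm (y - d) < \<epsilon>/2"
    using step.IH step.prems by (meson half_gt_zero)
  obtain q :: rat where q: "\<bar>c - of_rat q\<bar> * norm x < \<epsilon>/2"
  proof (cases "x = 0")
    case False
    then obtain q :: rat where "c - \<epsilon>/2/norm x < of_rat q" "of_rat q < c + \<epsilon>/2/norm x"
      using of_rat_dense[of "c - \<epsilon>/2/norm x" "c + \<epsilon>/2/norm x"] step.prems by auto
    hence "\<bar>c - of_rat q\<bar> < \<epsilon>/2/norm x" by auto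
    hence "\<bar>c - of_rat q\<bar> * norm x < \<epsilon>/2" using False by (simp add: pos_less_divide_eq)
    thus ?thesis by (rule that)
  qed (use step.prems in auto)
  from d(1) obtain l where "d = sum_list (map (\<lambda>(q, j). of_rat q *\<^sub>R v j) l)"
    unfolding rat_combinations_def by blast
  hence "d + of_rat q *\<^sub>R v j \<in> rat_combinations v"
    unfolding rat_combinations_def by (auto intro!: range_eqI[of _ _ "(q, j) # l"])
  moreover have "norm (c *\<^sub>R x + y - (d + of_rat q *\<^sub>R v j)) < \<epsilon>"
  proof -
    have "c *\<^sub>R x + y - (d + of_rat q *\<^sub>R v j) = (c - of_rat q) *\<^sub>R x + (y - d)"
      using x by (simp add: algebra_simps)
    hence "norm (c *\<^sub>R x + y - (d + of_rat q *\<^sub>R v j)) \<le> \<bar>c - of_rat q\<bar> * norm x + norm (y - d)"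
      by (metis norm_scaleR norm_triangle_ineq)
    thus ?thesis using q d by linarith
  qed
  ultimately show ?case by blast
qed

lemma countable_norming_functionals:
  fixes v :: "nat \<Rightarrow> 'a::real_normed_vector"
  obtains \<Theta> :: "nat \<Rightarrow> 'a \<Rightarrow>\<^sub>L real"
  where "\<And>k. norm (\<Theta> k) \<le> 1"
    and "\<And>z. z \<in> closure (span (range v)) \<Longrightarrow> \<forall>k. \<Theta> k z = 0 \<Longrightarrow> z = 0"
proof -
  define D where "D = rat_combinations v"
  have "D \<noteq> {}" unfolding D_def rat_combinations_def by blast
  define d where "d = from_nat_into D"
  have range_d: "range d = D"
    unfolding d_def by (rule range_from_nat_into[OF \<open>D \<noteq> {}\<close>]) (simp add: D_def countable_rat_combinations)
  have "\<forall>k. \<exists>\<theta> :: 'a \<Rightarrow>\<^sub>L real. norm \<theta> \<le> 1 \<and> blinfun_apply \<theta> (d k) = norm (d k)"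
    by (meson exists_norming_functional)
  then obtain \<Theta> :: "nat \<Rightarrow> 'a \<Rightarrow>\<^sub>L real"
    where \<Theta>: "\<And>k. norm (\<Theta> k) \<le> 1" "\<And>k. \<Theta> k (d k) = norm (d k)" by metis
  have "z = 0" if z: "z \<in> closure (span (range v))" and zero: "\<And>k. \<Theta> k z = 0" for z
  proof -
    have "norm z < 4 * \<epsilon>" if "\<epsilon> > 0" for \<epsilon>
    proof -
      obtain y where y: "y \<in> span (range v)" "norm (z - y) < \<epsilon>"
        using closure_approachableD[OF z \<open>\<epsilon> > 0\<close>] by (auto simp: dist_norm)
      have "\<exists>d'\<in>range d. norm (y - d') < \<epsilon>"
        using rat_combinations_dense[OF y(1) \<open>\<epsilon> > 0\<close>] range_d unfolding D_def by simp
      then obtain k where k: "norm (y - d k) < \<epsilon>" by blast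
      have "norm (d k - z) < 2 * \<epsilon>"
        using norm_triangle_lt[of "d k - y" "y - z" "2 * \<epsilon>"] y(2) k
        by (simp add: norm_minus_commute)
      have "norm (d k) = \<Theta> k (d k - z)" using \<Theta>(2) zero by (simp add: blinfun.diff_right)
      also have "\<dots> \<le> norm (d k - z)"
        using norm_blinfun[of "\<Theta> k" "d k - z"] mult_right_mono[OF \<Theta>(1)[of k], of "norm (d k - z)"]
        by simp
      finally show ?thesis
        using \<open>norm (d k - z) < 2 * \<epsilon>\<close> norm_triangle_ineq4[of "d k" "d k - z"] by simp
    qed
    from this[of "norm z / 4"] show "z = 0" by (cases "z = 0") auto
  qed
  thus ?thesis using that \<Theta>(1) by blast
qed

lemma diagonal_convergent_subsequence:
  fixes a :: "nat \<Rightarrow> nat \<Rightarrow> real"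
  assumes "\<And>k. Bseq (a k)"
  obtains r where "strict_mono r" "\<And>k. convergent (\<lambda>n. a k (r n))"
proof -
  interpret subseqs "\<lambda>k s. convergent (\<lambda>n. a k (s n))"
  proof
    fix k and s :: "nat \<Rightarrow> nat"
    obtain f where "strict_mono f" "monoseq (\<lambda>n. a k (s (f n)))"
      using seq_monosub[of "\<lambda>n. a k (s n)"] by blast
    moreover have "Bseq (\<lambda>n. a k (s (f n)))" using assms Bseq_subseq by blast
    ultimately show "\<exists>r'. strict_mono r' \<and> convergent (\<lambda>n. a k ((s \<circ> r') n))"
      using Bseq_monoseq_convergent by auto
  qed
  have "convergent (\<lambda>n. a k (diagseq n))" for k
  proof -
    have "convergent (\<lambda>n. a k ((diagseq \<circ> (+) (Suc k)) n))"
    proof (rule diagseq_holds)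
      fix r s :: "nat \<Rightarrow> nat" and k assume "strict_mono r" "convergent (\<lambda>n. a k (s n))"
      thus "convergent (\<lambda>n. a k ((s \<circ> r) n))"
        using convergent_subseq_convergent[of "\<lambda>n. a k (s n)" r] by (simp add: comp_def)
    qed
    then obtain L where "(\<lambda>n. a k (diagseq (n + Suc k))) \<longlonglongrightarrow> L"
      unfolding convergent_def by (auto simp only: o_def add.commute)
    hence "(\<lambda>n. a k (diagseq n)) \<longlonglongrightarrow> L" by (rule LIMSEQ_offset)
    thus ?thesis unfolding convergent_def by blast
  qed
  thus ?thesis using that subseq_diagseq by blast
qed

lemma exists_canonical_weak_star_cluster:
  fixes v :: "nat \<Rightarrow> 'a::banach"
  assumes "\<And>n. norm (v n) \<le> R" "subspace V" "\<And>n. v n \<in> V"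
    and "\<And>\<eta>. weak_star_cluster (\<lambda>n. canon_bidual (v n)) \<eta> \<Longrightarrow> \<eta> \<in> range canon_bidual"
  obtains x where "x \<in> closure V" "weak_star_cluster (\<lambda>n. canon_bidual (v n)) (canon_bidual x)"
proof -
  obtain \<eta> where \<eta>: "weak_star_cluster (\<lambda>n. canon_bidual (v n)) \<eta>"
    using bounded_weak_star_cluster[of "\<lambda>n. canon_bidual (v n)" R] assms(1) by auto
  then obtain x where x: "\<eta> = canon_bidual x" using assms(4) by blast
  hence "x \<in> closure V" using weak_star_cluster_in_closure[OF assms(2,3)] \<eta> by simp
  thus ?thesis using that \<eta> x by blast
qed

lemma weak_star_cluster_subseq:
  fixes g :: "nat \<Rightarrow> ('c::real_normed_vector \<Rightarrow>\<^sub>L real) \<Rightarrow>\<^sub>L real"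
  assumes "strict_mono s" "weak_star_cluster (\<lambda>n. g (s n)) \<eta>"
  shows "weak_star_cluster g \<eta>"
  unfolding weak_star_cluster_def
proof (intro allI impI)
  fix \<Phi> :: "('c \<Rightarrow>\<^sub>L real) set" and e :: real and m :: nat
  assume "finite \<Phi>" "e > 0"
  then obtain n where "n \<ge> m" "\<And>\<theta>. \<theta> \<in> \<Phi> \<Longrightarrow> \<bar>g (s n) \<theta> - \<eta> \<theta>\<bar> < e"
    using weak_star_clusterD[OF assms(2)] by metis
  moreover have "s n \<ge> n" using seq_suble[OF assms(1)] .
  ultimately show "\<exists>n\<ge>m. \<forall>\<theta>\<in>\<Phi>. \<bar>g n \<theta> - \<eta> \<theta>\<bar> < e" by (meson order_trans)
qed

lemma canonical_weak_star_cluster_unique: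
  fixes w :: "nat \<Rightarrow> 'a::banach" and \<Theta> :: "nat \<Rightarrow> 'a \<Rightarrow>\<^sub>L real"
  assumes separating: "\<And>z. z \<in> closure V \<Longrightarrow> \<forall>k. \<Theta> k z = 0 \<Longrightarrow> z = 0"
    and "subspace V" and conv: "\<And>k. convergent (\<lambda>n. \<Theta> k (w n))"
    and "x \<in> closure V" "weak_star_cluster (\<lambda>n. canon_bidual (w n)) (canon_bidual x)"
    and "x' \<in> closure V" "weak_star_cluster (\<lambda>n. canon_bidual (w n)) (canon_bidual x')"
  shows "x' = x"
proof -
  have "\<Theta> k (x' - x) = 0" for k
  proof -
    obtain L where "(\<lambda>n. \<Theta> k (w n)) \<longlonglongrightarrow> L" using conv[of k] by (auto simp: convergent_def)
    hence "\<Theta> k x' = L" "\<Theta> k x = L"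
      using weak_star_cluster_limit[OF assms(7), of "\<Theta> k"]
        weak_star_cluster_limit[OF assms(5), of "\<Theta> k"] by simp_all
    thus ?thesis by (simp add: blinfun.diff_right)
  qed
  moreover have "x' - x \<in> closure V"
    using subspace_closure[OF \<open>subspace V\<close>] assms(4,6) by (simp add: subspace_diff)
  ultimately show ?thesis using separating by force
qed

text \<open>A substitute for Eberlein--Smulian: countably many norming functionals replace
  metrizability of the weak topology, since along a diagonal subsequence on which they all
  converge the canonical cluster point is unique.\<close>
lemma weakly_convergent_subsequence:
  fixes v :: "nat \<Rightarrow> 'a::banach"
  assumes bound: "\<And>n. norm (v n) \<le> R"
    and canonical: "\<And>s \<eta>. strict_mono s \<Longrightarrow> weak_star_cluster (\<lambda>n. canon_bidual (v (s n))) \<eta>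
      \<Longrightarrow> \<eta> \<in> range canon_bidual"
  obtains s x where "strict_mono s" "weakly_converges_to (v \<circ> s) x"
proof -
  define V where "V = span (range v)"
  obtain \<Theta> :: "nat \<Rightarrow> 'a \<Rightarrow>\<^sub>L real" where \<Theta>: "\<And>k. norm (\<Theta> k) \<le> 1"
    "\<And>z. z \<in> closure V \<Longrightarrow> \<forall>k. \<Theta> k z = 0 \<Longrightarrow> z = 0"
    using countable_norming_functionals[of v] unfolding V_def by blast
  have "Bseq (\<lambda>n. \<Theta> k (v n))" for k
  proof (rule BseqI')
    show "norm (\<Theta> k (v n)) \<le> R" for n
      using norm_blinfun[of "\<Theta> k" "v n"] mult_mono[OF \<Theta>(1) bound] by (simp add: order_trans)
  qed
  then obtain r where r: "strict_mono r" and conv: "\<And>k. convergent (\<lambda>n. \<Theta> k (v (r n)))"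
    using diagonal_convergent_subsequence[of "\<lambda>k n. \<Theta> k (v n)"] by blast
  have cluster: "\<exists>x. x \<in> closure V \<and> weak_star_cluster (\<lambda>n. canon_bidual (v (r (s n)))) (canon_bidual x)"
    if s: "strict_mono s" for s
  proof -
    have "norm (v (r (s n))) \<le> R" "v (r (s n)) \<in> V" for n
      using bound unfolding V_def by (simp_all add: span_base)
    moreover have "\<eta> \<in> range canon_bidual"
      if "weak_star_cluster (\<lambda>n. canon_bidual (v (r (s n)))) \<eta>" for \<eta>
      using canonical[of "r \<circ> s" \<eta>] strict_mono_o[OF r s] that by (simp add: o_def)
    moreover have "subspace V" unfolding V_def by simp
    ultimately show ?thesis using exists_canonical_weak_star_cluster by metis
  qed
  obtain x where x: "x \<in> closure V" "weak_star_cluster (\<lambda>n. canon_bidual (v (r n))) (canon_bidual x)"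
    using cluster[OF strict_mono_id] by (auto simp: id_def)
  have "weak_star_cluster (\<lambda>n. canon_bidual (v (r (s n)))) (canon_bidual x)" if s: "strict_mono s" for s
  proof -
    obtain x' where x': "x' \<in> closure V" "weak_star_cluster (\<lambda>n. canon_bidual (v (r (s n)))) (canon_bidual x')"
      using cluster[OF s] by blast
    have "x' = x"
      using canonical_weak_star_cluster_unique[OF \<Theta>(2) _ conv x x'(1)]
        weak_star_cluster_subseq[OF s x'(2)] unfolding V_def by simp
    thus ?thesis using x'(2) by simp
  qed
  hence "weakly_converges_to (v \<circ> r) x"
    by (intro weakly_converges_if_subsequences_cluster) simp
  thus ?thesis using that r by blast
qed

section \<open>Minimizing sequences\<close>

lemma F_cwmcD:
  assumes "F_cwmc N f"
  shows F_cwmc_nonneg: "\<And>a. a \<in> cone N \<Longrightarrow> 0 \<le> f a"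
    and F_cwmc_mono: "\<And>a b. a \<in> cone N \<Longrightarrow> b \<in> cone N \<Longrightarrow> (\<And>i. i < N \<Longrightarrow> a i \<le> b i) \<Longrightarrow> f a \<le> f b"
    and F_cwmc_strict_mono:
      "\<And>a b. a \<in> cone N \<Longrightarrow> b \<in> cone N \<Longrightarrow> (\<And>i. i < N \<Longrightarrow> a i < b i) \<Longrightarrow> f a < f b"
    and F_cwmc_coercive: "\<exists>R. \<forall>a\<in>cone N. (\<exists>i<N. R \<le> a i) \<longrightarrow> M \<le> f a"
  using assms unfolding F_cwmc_def by blast+

lemma distances_in_cone: "(\<lambda>i. if i < length xs then norm (x - xs ! i) else 0) \<in> cone (length xs)"
  unfolding cone_def by auto

lemma rad_f_le_r_f:
  assumes "F_cwmc (length xs) f" "y \<in> Y"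
  shows "rad_f f Y xs \<le> r_f f y xs"
  unfolding rad_f_def
proof (rule cINF_lower[OF _ assms(2)])
  show "bdd_below ((\<lambda>y. r_f f y xs) ` Y)"
    using F_cwmc_nonneg[OF assms(1) distances_in_cone] unfolding r_f_def by (intro bdd_belowI) auto
qed

lemma convergent_r_f_imp_bounded:
  fixes u :: "nat \<Rightarrow> 'a::real_normed_vector"
  assumes F: "F_cwmc (length xs) f" and "xs \<noteq> []" and "convergent (\<lambda>n. r_f f (u n) xs)"
  obtains R where "\<And>n. norm (u n) \<le> R"
proof -
  obtain B where "\<forall>n. norm (r_f f (u n) xs) \<le> B"
    using convergent_imp_Bseq[OF assms(3)] unfolding Bseq_def by blast
  hence B: "\<And>n. r_f f (u n) xs \<le> B" by (simp add: abs_le_iff)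
  obtain R where R: "\<And>a. a \<in> cone (length xs) \<Longrightarrow> (\<exists>i<length xs. R \<le> a i) \<Longrightarrow> B + 1 \<le> f a"
    using F_cwmc_coercive[OF F, of "B + 1"] by blast
  have "norm (u n) \<le> R + norm (xs ! 0)" for n
  proof (rule ccontr)
    assume "\<not> ?thesis"
    hence "R \<le> norm (u n - xs ! 0)" using norm_triangle_ineq2[of "u n" "xs ! 0"] by linarith
    hence "B + 1 \<le> r_f f (u n) xs"
      unfolding r_f_def using R[OF distances_in_cone] \<open>xs \<noteq> []\<close> by force
    thus False using B[of n] by simp
  qed
  thus ?thesis by (rule that)
qed

context linear_isometry
begin

lemma weakly_converges_image:
  assumes "weakly_converges_to w x"
  shows "weakly_converges_to (\<lambda>n. J (w n)) (J x)"
  unfolding weakly_converges_to_def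
proof
  fix \<phi> :: "'a \<Rightarrow>\<^sub>L real"
  have "(\<lambda>n. (\<phi> o\<^sub>L Blinfun J) (w n)) \<longlonglongrightarrow> (\<phi> o\<^sub>L Blinfun J) x"
    using assms unfolding weakly_converges_to_def by blast
  thus "(\<lambda>n. \<phi> (J (w n))) \<longlonglongrightarrow> \<phi> (J x)" by simp
qed

end

context L_embedded_pair
begin

text \<open>The image of a cluster point \<open>canon_bidual y + t\<close>, \<open>Q t = 0\<close>, is at distance
  \<open>norm (J y - x) + norm t\<close> from every \<open>x\<close>. By weak-star lower semicontinuity of the norm,
  \<open>J (v n)\<close> is then frequently farther than \<open>norm (J y - x) + norm t / 2\<close> from every point
  \<open>x\<close> of \<open>xs\<close>; if \<open>t \<noteq> 0\<close>, strict monotonicity of \<open>f\<close> forbids this for a minimizing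
  sequence.\<close>
lemma minimizing_weak_star_cluster_canonical:
  assumes F: "F_cwmc (length xs) f"
    and lim: "(\<lambda>n. r_f f (J (v n)) xs) \<longlonglongrightarrow> rad_f f (range J) xs"
    and cluster: "weak_star_cluster (\<lambda>n. canon_bidual (v n)) \<eta>"
  shows "\<eta> \<in> range canon_bidual"
proof (rule ccontr)
  assume "\<eta> \<notin> range canon_bidual"
  then obtain y t where \<eta>: "\<eta> = canon_bidual y + t" and "Q t = 0" "t \<noteq> 0"
    using Q_decompose by metis
  define N where "N = length xs"
  define \<delta> where "\<delta> = norm t"
  have "\<delta> > 0" using \<open>t \<noteq> 0\<close> unfolding \<delta>_def by simp
  define a where "a = (\<lambda>i. if i < N then norm (J y - xs ! i) else 0)"
  define a' where "a' = (\<lambda>i. if i < N then norm (J y - xs ! i) + \<delta>/2 else 0)"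
  have "a \<in> cone N" "a' \<in> cone N"
    unfolding a_def a'_def cone_def using \<open>\<delta> > 0\<close> by auto
  have "rad_f f (range J) xs \<le> f a"
    using rad_f_le_r_f[OF F, of "J y" "range J"] unfolding r_f_def a_def N_def by simp
  also have "f a < f a'"
    using F_cwmc_strict_mono[OF F[folded N_def] \<open>a \<in> cone N\<close> \<open>a' \<in> cone N\<close>] \<open>\<delta> > 0\<close>
    unfolding a_def a'_def by simp
  finally have "\<forall>\<^sub>F n in sequentially. r_f f (J (v n)) xs < f a'"
    by (rule order_tendstoD(2)[OF lim])
  then obtain m where m: "\<And>n. n \<ge> m \<Longrightarrow> r_f f (J (v n)) xs < f a'"
    unfolding eventually_sequentially by blast
  obtain n where "n \<ge> m" and far:
    "\<And>i. i \<in> {..<N} \<Longrightarrow> norm (bidual_map J \<eta> - canon_bidual (xs ! i)) - \<delta>/2 < norm (J (v n) - xs ! i)"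
    using weak_star_cluster_norm_lower[OF weak_star_cluster_bidual_map[OF cluster], of "{..<N}" "\<delta>/2"]
      \<open>\<delta> > 0\<close> by auto
  have "a' i \<le> norm (J (v n) - xs ! i)" if "i < N" for i
    using far[of i] that norm_bidual_map_minus_canon[OF \<open>Q t = 0\<close>] unfolding a'_def \<eta> \<delta>_def by simp
  hence "f a' \<le> r_f f (J (v n)) xs"
    unfolding r_f_def N_def[symmetric]
    by (intro F_cwmc_mono[OF F[folded N_def] \<open>a' \<in> cone N\<close>]) (auto simp: cone_def)
  thus False using m[OF \<open>n \<ge> m\<close>] by simp
qed

lemma weak_cwmc_SACP_range: "weak_cwmc_SACP (range J)"
  unfolding weak_cwmc_SACP_def
proof (intro allI impI, elim conjE)
  fix xs :: "'a list" and f and u :: "nat \<Rightarrow> 'a"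
  assume "xs \<noteq> []" and F: "F_cwmc (length xs) f" and "\<forall>n. u n \<in> range J"
    and lim: "(\<lambda>n. r_f f (u n) xs) \<longlonglongrightarrow> rad_f f (range J) xs"
  then obtain v where u: "u = (\<lambda>n. J (v n))" by (metis rangeE choice ext)
  obtain R where "\<And>n. norm (u n) \<le> R"
    using convergent_r_f_imp_bounded[OF F \<open>xs \<noteq> []\<close>] lim convergent_def by blast
  hence bound: "\<And>n. norm (v n) \<le> R" by (simp add: u norm_J)
  have canonical: "\<eta> \<in> range canon_bidual"
    if "strict_mono s" "weak_star_cluster (\<lambda>n. canon_bidual (v (s n))) \<eta>" for s \<eta>
    using minimizing_weak_star_cluster_canonical[OF F _ that(2)] LIMSEQ_subseq_LIMSEQ[OF lim that(1)]
    by (simp add: u o_def)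
  obtain s x where "strict_mono s" "weakly_converges_to (v \<circ> s) x"
    using weakly_convergent_subsequence[of v R] bound canonical by blast
  thus "\<exists>s x. strict_mono s \<and> weakly_converges_to (u \<circ> s) x"
    using weakly_converges_image unfolding u o_def by blast
qed

end

theorem theorem3p8:
  fixes J :: "'b::banach \<Rightarrow> 'a::banach"
  assumes "L_embedded TYPE('a)"
    and "linear J" and "\<And>y. norm (J y) = norm y"
    and "L_embedded TYPE('b)"
  shows "weak_cwmc_SACP (range J)"
proof -
  obtain P :: "('a \<Rightarrow>\<^sub>L real) \<Rightarrow>\<^sub>L real \<Rightarrow> ('a \<Rightarrow>\<^sub>L real) \<Rightarrow>\<^sub>L real"
    where "L_projection P" "range P = range canon_bidual"
    using assms(1) unfolding L_embedded_def by blast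
  moreover obtain Q :: "('b \<Rightarrow>\<^sub>L real) \<Rightarrow>\<^sub>L real \<Rightarrow> ('b \<Rightarrow>\<^sub>L real) \<Rightarrow>\<^sub>L real"
    where "L_projection Q" "range Q = range canon_bidual"
    using assms(4) unfolding L_embedded_def by blast
  ultimately interpret L_embedded_pair J P Q
    by (intro L_embedded_pair.intro linear_isometry.intro L_embedded_pair_axioms.intro assms(2,3))
  show ?thesis by (rule weak_cwmc_SACP_range)
qed
end
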